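(* Let $\{\varphi_i\}_{i=1}^N\subset S^{d-1}$ be a frame for $\mathbb{R}^d$ with frame operator $S_\Phi=\sum_{i=1}^N\varphi_i\varphi_i^\top$, and let $\{\psi_i\}_{i=1}^N$ be a dual frame to it (i.e. $x=\sum_i\langle x,\varphi_i\rangle\psi_i$ for all $x\in\mathbb{R}^d$). For each $i$ let $z_i=\psi_i-S_\Phi^{-1}\varphi_i$, and let $a:=\min_{i\ne j}\langle\varphi_i,S_\Phi^{-1}(\varphi_i-\varphi_j)\rangle$. If $\max_j\|z_j\|\le a/N$, then the identity permutation is the optimal permutation $\sigma$ for the mass transport problem between $\frac1N\sum_i\delta_{\varphi_i}$ and $\frac1N\sum_i\delta_{\psi_i}$, i.e. it minimizes $\frac1N\sum_{i=1}^N\|\varphi_i-\psi_{\sigma(i)}\|^2$ over all permutations $\sigma$ of $\{1,\dots,N\}$.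
   Context: $S^{d-1}$ is the unit sphere in $\mathbb{R}^d$. A finite frame is a finite spanning set of $\mathbb{R}^d$. *)

theory Defs
  imports "HOL-Analysis.Analysis" "HOL-Combinatorics.Permutations"
begin

definition frame_op :: "(nat \<Rightarrow> 'a::euclidean_space) \<Rightarrow> nat \<Rightarrow> 'a \<Rightarrow> 'a" where
  "frame_op phi N = (\<lambda>x. \<Sum>i<N. (x \<bullet> phi i) *\<^sub>R phi i)"

definition is_frame :: "(nat \<Rightarrow> 'a::euclidean_space) \<Rightarrow> nat \<Rightarrow> bool" where
  "is_frame phi N \<longleftrightarrow> span (phi ` {..<N}) = UNIV"

definition is_dual_frame :: "(nat \<Rightarrow> 'a::euclidean_space) \<Rightarrow> (nat \<Rightarrow> 'a) \<Rightarrow> nat \<Rightarrow> bool" where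
  "is_dual_frame phi psi N \<longleftrightarrow> (\<forall>x. x = (\<Sum>i<N. (x \<bullet> phi i) *\<^sub>R psi i))"

end

theory Submission
  imports Defs
begin

text \<open>Expanding the squares, the transport cost of a permutation differs from that of the identity
  only through the cross terms \<open>\<langle>\<phi>\<^sub>i, \<psi>\<^sub>\<sigma>\<^sub>(\<^sub>i\<^sub>)\<rangle>\<close>. Write \<open>\<psi>\<^sub>j = S\<^sup>-\<^sup>1\<phi>\<^sub>j + z\<^sub>j\<close>; since \<open>\<phi>\<^sub>i\<close> is a unit vector,
  \<open>\<langle>\<phi>\<^sub>i, \<psi>\<^sub>i - \<psi>\<^sub>j\<rangle> \<ge> \<langle>\<phi>\<^sub>i, S\<^sup>-\<^sup>1(\<phi>\<^sub>i - \<phi>\<^sub>j)\<rangle> - \<parallel>z\<^sub>i\<parallel> - \<parallel>z\<^sub>j\<parallel> \<ge> a - 2M \<ge> (N - 2)M \<ge> 0\<close>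
  with \<open>M = max\<^sub>j \<parallel>z\<^sub>j\<parallel>\<close>,
  so the identity maximises every cross term separately.\<close>

lemma linear_frame_op: "linear (frame_op phi N)"
  unfolding frame_op_def
  by (rule linearI) (simp_all add: inner_add_left scaleR_add_left sum.distrib scaleR_sum_right)

lemma inner_frame_op_self: "x \<bullet> frame_op phi N x = (\<Sum>i<N. (x \<bullet> phi i)\<^sup>2)"
  unfolding frame_op_def by (simp add: inner_sum_right power2_eq_square)

lemma inj_frame_op:
  fixes phi :: "nat \<Rightarrow> 'a::euclidean_space"
  assumes "is_frame phi N"
  shows "inj (frame_op phi N)"
proof -
  have "x = 0" if "frame_op phi N x = 0" for x
  proof -
    have "(\<Sum>i<N. (x \<bullet> phi i)\<^sup>2) = 0"
      using that by (simp flip: inner_frame_op_self)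
    then have "\<And>y. y \<in> phi ` {..<N} \<Longrightarrow> orthogonal x y"
      by (subst (asm) sum_nonneg_eq_0_iff) (auto simp: orthogonal_def)
    with assms have "orthogonal x x"
      unfolding is_frame_def by (intro orthogonal_to_span[of x]) auto
    then show ?thesis by (simp add: orthogonal_def)
  qed
  then show ?thesis
    using linear_frame_op linear_injective_0 by blast
qed

lemma linear_inv_frame_op:
  assumes "is_frame phi N"
  shows "linear (inv (frame_op phi N))"
  using inj_linear_imp_inv_linear[OF linear_frame_op inj_frame_op[OF assms]] .

lemma sum_norm_diff_permute_le:
  fixes x y :: "nat \<Rightarrow> 'a::real_inner"
  assumes "\<sigma> permutes {..<N}"
    and "\<And>i. i < N \<Longrightarrow> x i \<bullet> y (\<sigma> i) \<le> x i \<bullet> y i"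
  shows "(\<Sum>i<N. (norm (x i - y i))\<^sup>2) \<le> (\<Sum>i<N. (norm (x i - y (\<sigma> i)))\<^sup>2)"
proof -
  have expand: "(norm (x i - y k))\<^sup>2 = (norm (x i))\<^sup>2 - 2 * (x i \<bullet> y k) + (norm (y k))\<^sup>2" for i k
    by (simp add: power2_norm_eq_inner inner_diff_left inner_diff_right inner_commute)
  have "(\<Sum>i<N. (norm (y (\<sigma> i)))\<^sup>2) = (\<Sum>i<N. (norm (y i))\<^sup>2)"
    using sum.permute[OF assms(1), of "\<lambda>i. (norm (y i))\<^sup>2"] by (simp add: comp_def)
  moreover have "(\<Sum>i<N. x i \<bullet> y (\<sigma> i)) \<le> (\<Sum>i<N. x i \<bullet> y i)"
    using assms(2) by (intro sum_mono) auto
  ultimately show ?thesis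
    unfolding expand by (simp add: sum.distrib sum_subtractf flip: sum_distrib_left)
qed

lemma inner_le_of_approx_images:
  fixes T :: "'a::real_inner \<Rightarrow> 'a"
  assumes "linear T" "norm u = 1"
    and "norm (p - T u) \<le> M" "norm (q - T v) \<le> M"
    and "2 * M \<le> u \<bullet> T (u - v)"
  shows "u \<bullet> q \<le> u \<bullet> p"
proof -
  have "\<bar>u \<bullet> (p - T u)\<bar> \<le> M" "\<bar>u \<bullet> (q - T v)\<bar> \<le> M"
    using Cauchy_Schwarz_ineq2[of u "p - T u"] Cauchy_Schwarz_ineq2[of u "q - T v"] assms(2-4)
    by simp_all
  moreover have "u \<bullet> p - u \<bullet> q = u \<bullet> T (u - v) + u \<bullet> (p - T u) - u \<bullet> (q - T v)"
    using assms(1) by (simp add: linear_diff inner_diff_right)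
  ultimately show ?thesis
    using assms(5) by linarith
qed

lemma Min_pairs_le:
  fixes f :: "nat \<Rightarrow> nat \<Rightarrow> 'b::linorder"
  assumes "i < N" "j < N" "i \<noteq> j"
  shows "Min {f i j | i j. i < N \<and> j < N \<and> i \<noteq> j} \<le> f i j"
proof (rule Min_le)
  have "{f i j | i j. i < N \<and> j < N \<and> i \<noteq> j} \<subseteq> (\<lambda>(i, j). f i j) ` ({..<N} \<times> {..<N})"
    by auto
  then show "finite {f i j | i j. i < N \<and> j < N \<and> i \<noteq> j}"
    by (rule finite_subset) (intro finite_imageI finite_cartesian_product finite_lessThan)
qed (use assms in blast)

theorem mainTheorem10:
  fixes phi psi :: "nat \<Rightarrow> 'a::euclidean_space" and N :: nat
  assumes frame: "is_frame phi N"
    and unit: "\<forall>i<N. norm (phi i) = 1"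
    and dual: "is_dual_frame phi psi N"
    and small: "(MAX j\<in>{..<N}. norm (psi j - inv (frame_op phi N) (phi j)))
        \<le> (Min {phi i \<bullet> inv (frame_op phi N) (phi i - phi j) | i j. i < N \<and> j < N \<and> i \<noteq> j}) / real N"
  shows "\<forall>\<sigma>. \<sigma> permutes {..<N} \<longrightarrow>
           (1 / real N) * (\<Sum>i<N. (norm (phi i - psi i))\<^sup>2)
             \<le> (1 / real N) * (\<Sum>i<N. (norm (phi i - psi (\<sigma> i)))\<^sup>2)"
proof (intro allI impI)
  fix \<sigma> assume \<sigma>: "\<sigma> permutes {..<N}"
  define T where "T = inv (frame_op phi N)"
  define M where "M = (MAX j\<in>{..<N}. norm (psi j - T (phi j)))"
  define a where "a = Min {phi i \<bullet> T (phi i - phi j) | i j. i < N \<and> j < N \<and> i \<noteq> j}"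
  have M_ge: "norm (psi k - T (phi k)) \<le> M" if "k < N" for k
    unfolding M_def using that by (intro Max_ge) auto
  have "phi i \<bullet> psi (\<sigma> i) \<le> phi i \<bullet> psi i" if i: "i < N" for i
  proof (cases "\<sigma> i = i")
    case False
    have j: "\<sigma> i < N" using permutes_in_image[OF \<sigma>] i by simp
    with i False have "2 \<le> N" by linarith
    moreover have "0 \<le> M" using M_ge[OF i] norm_ge_zero order_trans by blast
    ultimately have "2 * M \<le> M * real N"
      by (simp add: mult.commute mult_left_mono)
    also have "M * real N \<le> a"
      using small \<open>2 \<le> N\<close> unfolding M_def a_def T_def by (simp add: field_simps)
    also have "a \<le> phi i \<bullet> T (phi i - phi (\<sigma> i))"
      unfolding a_def using Min_pairs_le[OF i j not_sym[OF False], of "\<lambda>i j. phi i \<bullet> T (phi i - phi j)"]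
      by simp
    finally show ?thesis
      using linear_inv_frame_op[OF frame] unit i M_ge[OF i] M_ge[OF j]
      unfolding T_def by (intro inner_le_of_approx_images) auto
  qed simp
  then show "(1 / real N) * (\<Sum>i<N. (norm (phi i - psi i))\<^sup>2)
             \<le> (1 / real N) * (\<Sum>i<N. (norm (phi i - psi (\<sigma> i)))\<^sup>2)"
    by (intro mult_left_mono sum_norm_diff_permute_le[OF \<sigma>]) auto
qed

end
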